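(* Let $K$ be a skew field, and let $D=(y_i^k)_{i,k\ge0}$ be an infinite matrix over $K$ (entry $y_i^k$ in row $k$, column $i$) which is generic. For $n\ge0$ let $D_n$ be the $(n+1)\times(n+1)$ matrix with entry $y_i^k$ in row $k$, column $i$, $0\le i,k\le n$, and let $(z_k^i)_n$ denote the entry in row $i$, column $k$ of $D_n^{-1}$, so that $(z_k^i)_n=(|D_n|_i^k)^{-1}$. Then for $0\le i,k\le n$, $$(z_k^i)_n=\sum_{m=\max(i,k)}^n\big(|D_m|_i^m\big)^{-1}\,|D_m|_m^m\,\big(|D_m|_m^k\big)^{-1}.$$
   Context: Quasideterminants: for a square matrix $M$ over $K$ with rows and columns indexed by $\{0,\ldots,n\}$, let $M_a^b$ denote its entry in row $b$, column $a$; the quasideterminant $|M|_a^b=M_a^b-r\,(M^{(b,a)})^{-1}c$, where $M^{(b,a)}$ is $M$ with row $b$ and column $a$ deleted, $r$ is row $b$ of $M$ with its column-$a$ entry deleted, and $c$ is column $a$ of $M$ with its row-$b$ entry deleted (for a $1\times1$ matrix, $|M|_0^0=M_0^0$). When $M$ is invertible, $|M|_a^b$ is the inverse of the entry of $M^{-1}$ in row $a$, column $b$; in the commutative case $|M|_a^b=(-1)^{a+b}\det M/\det M^{(b,a)}$. Genericity means all matrices and quasideterminants appearing are defined and invertible. *)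

theory Defs
  imports Main
begin

text \<open>Matrices over a skew field (type class division_ring) are functions
  M :: nat => nat => 'a, where M k i is the entry in row k, column i.
  A matrix "on R x C" only uses rows in R and columns in C.\<close>

definition is_inv :: "nat set \<Rightarrow> nat set \<Rightarrow> (nat \<Rightarrow> nat \<Rightarrow> 'a::division_ring) \<Rightarrow> (nat \<Rightarrow> nat \<Rightarrow> 'a) \<Rightarrow> bool" where
  "is_inv R C A B \<longleftrightarrow>
     (\<forall>k\<in>R. \<forall>k'\<in>R. (\<Sum>j\<in>C. A k j * B j k') = (if k = k' then 1 else 0)) \<and>
     (\<forall>j\<in>C. \<forall>j'\<in>C. (\<Sum>k\<in>R. B j k * A k j') = (if j = j' then 1 else 0))"

definition invertible_on :: "nat set \<Rightarrow> nat set \<Rightarrow> (nat \<Rightarrow> nat \<Rightarrow> 'a::division_ring) \<Rightarrow> bool" where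
  "invertible_on R C A \<longleftrightarrow> (\<exists>B. is_inv R C A B)"

definition minv :: "nat set \<Rightarrow> nat set \<Rightarrow> (nat \<Rightarrow> nat \<Rightarrow> 'a::division_ring) \<Rightarrow> (nat \<Rightarrow> nat \<Rightarrow> 'a)" where
  "minv R C A = (SOME B. is_inv R C A B)"

text \<open>Quasideterminant |M|_a^b of the (n+1)x(n+1) matrix M restricted to {0..n}:
  M_a^b - r (M^(b,a))^{-1} c, where M_a^b = M b a is the entry in row b, column a.\<close>
definition qdet :: "nat \<Rightarrow> (nat \<Rightarrow> nat \<Rightarrow> 'a::division_ring) \<Rightarrow> nat \<Rightarrow> nat \<Rightarrow> 'a" where
  "qdet n M a b = M b a -
     (\<Sum>j\<in>{0..n}-{a}. \<Sum>k\<in>{0..n}-{b}.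
        M b j * minv ({0..n}-{b}) ({0..n}-{a}) M j k * M k a)"

definition generic :: "(nat \<Rightarrow> nat \<Rightarrow> 'a::division_ring) \<Rightarrow> bool" where
  "generic D \<longleftrightarrow> (\<forall>n. invertible_on {0..n} {0..n} D \<and>
     (\<forall>a\<le>n. \<forall>b\<le>n. invertible_on ({0..n}-{b}) ({0..n}-{a}) D \<and> qdet n D a b \<noteq> 0))"

end

theory Submission
  imports Defs
begin

text \<open>Let Z and Z' be the inverses of D_n and D_(n+1), and p = n + 1. Bordering by one
  row and column changes the inverse of the old block only by a rank-one term:
  Z' i k = Z i k + Z' i p (Z' p p)^-1 Z' p k for i, k <= n. Telescoping from n = max i k, where
  the entry itself is such a single term, yields the sum; finally every entry of the inverse of
  D_m is the inverse of the corresponding quasideterminant of D_m.\<close>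

lemma is_inv_minv:
  assumes "invertible_on R C A"
  shows "is_inv R C A (minv R C A)"
  using assms unfolding invertible_on_def minv_def by (rule someI_ex)

lemma matrix_mult_assoc:
  fixes A B E :: "nat \<Rightarrow> nat \<Rightarrow> 'a::semiring_0"
  shows "(\<Sum>j\<in>C. (\<Sum>k\<in>R. A i k * B k j) * E j l) = (\<Sum>k\<in>R. A i k * (\<Sum>j\<in>C. B k j * E j l))"
  by (simp add: sum_distrib_left sum_distrib_right mult.assoc sum.swap[of _ C])

lemma is_inv_right_inverse_unique:
  fixes A B B' :: "nat \<Rightarrow> nat \<Rightarrow> 'a::division_ring"
  assumes inv: "is_inv R C A B" and fin: "finite R" "finite C"
    and right: "\<forall>k\<in>R. \<forall>k'\<in>R. (\<Sum>j\<in>C. A k j * B' j k') = (if k = k' then 1 else 0)"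
    and i: "i \<in> C" and k: "k \<in> R"
  shows "B' i k = B i k"
proof -
  have left: "(\<Sum>k'\<in>R. B i k' * A k' j) = (if i = j then 1 else 0)" if "j \<in> C" for j
    using inv i that unfolding is_inv_def by blast
  have "B' i k = (\<Sum>j\<in>C. (if i = j then 1 else 0) * B' j k)"
    using fin i by (simp add: of_bool_def[symmetric])
  also have "\<dots> = (\<Sum>j\<in>C. (\<Sum>k'\<in>R. B i k' * A k' j) * B' j k)"
    using left by simp
  also have "\<dots> = (\<Sum>k'\<in>R. B i k' * (\<Sum>j\<in>C. A k' j * B' j k))"
    by (rule matrix_mult_assoc)
  also have "\<dots> = (\<Sum>k'\<in>R. B i k' * (if k' = k then 1 else 0))"
    using right k by (intro sum.cong) auto
  also have "\<dots> = B i k"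
    using fin k by (simp add: of_bool_def[symmetric])
  finally show ?thesis .
qed

text \<open>Column \<open>b\<close> of \<open>D Z = 1\<close>, in the rows other than \<open>b\<close>, is a linear system whose
  matrix is \<open>D\<close> without row \<open>b\<close> and column \<open>a\<close>; multiply it by \<open>N\<close>.\<close>

lemma is_inv_column_eq_pivot:
  fixes D Z N :: "nat \<Rightarrow> nat \<Rightarrow> 'a::division_ring"
  assumes Z: "is_inv R C D Z" and N: "is_inv (R - {b}) (C - {a}) D N"
    and fin: "finite R" "finite C" and a: "a \<in> C" and b: "b \<in> R" and j: "j \<in> C - {a}"
  shows "Z j b = - (\<Sum>k\<in>R - {b}. N j k * D k a) * Z a b"
proof -
  have row: "(\<Sum>j'\<in>C - {a}. D k j' * Z j' b) = - (D k a * Z a b)" if k: "k \<in> R - {b}" for k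
  proof -
    have "0 = (\<Sum>j'\<in>C. D k j' * Z j' b)"
      using Z k b unfolding is_inv_def by auto
    also have "\<dots> = D k a * Z a b + (\<Sum>j'\<in>C - {a}. D k j' * Z j' b)"
      using fin a by (simp add: sum.remove)
    finally show ?thesis
      by (simp add: eq_neg_iff_add_eq_0 add.commute)
  qed
  have left: "(\<Sum>k\<in>R - {b}. N j k * D k j') = (if j = j' then 1 else 0)" if "j' \<in> C - {a}" for j'
    using N j that unfolding is_inv_def by blast
  have "Z j b = (\<Sum>j'\<in>C - {a}. (if j = j' then 1 else 0) * Z j' b)"
    using fin j by (simp add: of_bool_def[symmetric])
  also have "\<dots> = (\<Sum>j'\<in>C - {a}. (\<Sum>k\<in>R - {b}. N j k * D k j') * Z j' b)"
    using left by simp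
  also have "\<dots> = (\<Sum>k\<in>R - {b}. N j k * (\<Sum>j'\<in>C - {a}. D k j' * Z j' b))"
    by (rule matrix_mult_assoc)
  also have "\<dots> = (\<Sum>k\<in>R - {b}. N j k * - (D k a * Z a b))"
    using row by simp
  also have "\<dots> = - (\<Sum>k\<in>R - {b}. N j k * D k a) * Z a b"
    by (simp add: sum_distrib_right sum_negf mult.assoc)
  finally show ?thesis .
qed

lemma is_inv_quasideterminant_mult:
  fixes D Z N :: "nat \<Rightarrow> nat \<Rightarrow> 'a::division_ring"
  assumes Z: "is_inv R C D Z" and N: "is_inv (R - {b}) (C - {a}) D N"
    and fin: "finite R" "finite C" and a: "a \<in> C" and b: "b \<in> R"
  shows "(D b a - (\<Sum>j\<in>C - {a}. \<Sum>k\<in>R - {b}. D b j * N j k * D k a)) * Z a b = 1"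
proof -
  have "1 = (\<Sum>j\<in>C. D b j * Z j b)"
    using Z b unfolding is_inv_def by auto
  also have "\<dots> = D b a * Z a b + (\<Sum>j\<in>C - {a}. D b j * Z j b)"
    using fin a by (simp add: sum.remove)
  also have "(\<Sum>j\<in>C - {a}. D b j * Z j b)
      = (\<Sum>j\<in>C - {a}. D b j * (- (\<Sum>k\<in>R - {b}. N j k * D k a) * Z a b))"
    using is_inv_column_eq_pivot[OF Z N fin a b] by simp
  also have "\<dots> = - (\<Sum>j\<in>C - {a}. \<Sum>k\<in>R - {b}. D b j * N j k * D k a) * Z a b"
    by (simp add: sum_distrib_left sum_distrib_right sum_negf mult.assoc)
  finally show ?thesis
    by (simp add: algebra_simps)
qed

lemma minv_eq_inverse_qdet:
  fixes D :: "nat \<Rightarrow> nat \<Rightarrow> 'a::division_ring"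
  assumes "generic D" and "a \<le> m" and "b \<le> m"
  shows "minv {0..m} {0..m} D a b = inverse (qdet m D a b)"
proof -
  have "is_inv {0..m} {0..m} D (minv {0..m} {0..m} D)"
    and "is_inv ({0..m} - {b}) ({0..m} - {a}) D (minv ({0..m} - {b}) ({0..m} - {a}) D)"
    using assms is_inv_minv unfolding generic_def by blast+
  from is_inv_quasideterminant_mult[OF this] assms(2,3)
  have "qdet m D a b * minv {0..m} {0..m} D a b = 1"
    unfolding qdet_def by simp
  then show ?thesis
    by (rule inverse_unique[symmetric])
qed

text \<open>Subtracting Z i p (Z p p)^-1 Z p k removes exactly the contribution of the extra
  column p to D Z, so the corrected block is a right inverse of the old block.\<close>

lemma is_inv_bordered_block:
  fixes D Z Y :: "nat \<Rightarrow> nat \<Rightarrow> 'a::division_ring"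
  assumes Z: "is_inv (insert p S) (insert p S) D Z" and Y: "is_inv S S D Y"
    and fin: "finite S" and p: "p \<notin> S" and corner: "Z p p \<noteq> 0"
    and i: "i \<in> S" and k: "k \<in> S"
  shows "Z i k = Y i k + Z i p * inverse (Z p p) * Z p k"
proof -
  define W where "W i k = Z i k - Z i p * inverse (Z p p) * Z p k" for i k
  have border: "(\<Sum>j\<in>S. D k j * Z j k') = (if k = k' then 1 else 0) - D k p * Z p k'"
    if "k \<in> S" "k' \<in> insert p S" for k k'
  proof -
    have "(\<Sum>j\<in>insert p S. D k j * Z j k') = (if k = k' then 1 else 0)"
      using Z that unfolding is_inv_def by blast
    then show ?thesis
      using fin p by (simp add: algebra_simps)
  qed
  have "\<forall>k\<in>S. \<forall>k'\<in>S. (\<Sum>j\<in>S. D k j * W j k') = (if k = k' then 1 else 0)"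
  proof (intro ballI)
    fix k k' assume kk': "k \<in> S" "k' \<in> S"
    have "(\<Sum>j\<in>S. D k j * W j k')
        = (\<Sum>j\<in>S. D k j * Z j k') - (\<Sum>j\<in>S. D k j * Z j p) * inverse (Z p p) * Z p k'"
      unfolding W_def by (simp add: algebra_simps sum_subtractf sum_distrib_right)
    also have "\<dots> = (if k = k' then 1 else 0)"
    proof -
      have "(\<Sum>j\<in>S. D k j * Z j p) = - (D k p * Z p p)"
        using border[of k p] kk' p by auto
      moreover have "- (D k p * Z p p) * inverse (Z p p) = - D k p"
        using corner by (simp add: mult.assoc)
      ultimately show ?thesis
        using border[of k k'] kk' by simp
    qed
    finally show "(\<Sum>j\<in>S. D k j * W j k') = (if k = k' then 1 else 0)" .
  qed
  then have "W i k = Y i k"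
    using is_inv_right_inverse_unique[OF Y fin fin] i k by blast
  then show ?thesis
    unfolding W_def by (simp add: algebra_simps)
qed

lemma inverse_entry_telescope:
  fixes Z :: "nat \<Rightarrow> nat \<Rightarrow> nat \<Rightarrow> 'a::division_ring"
  assumes inv: "\<And>m. is_inv {0..m} {0..m} D (Z m)" and corner: "\<And>m. Z m m m \<noteq> 0"
    and "i \<le> n" and "k \<le> n"
  shows "Z n i k = (\<Sum>m\<in>{max i k..n}. Z m i m * inverse (Z m m m) * Z m m k)"
  using max.boundedI[OF \<open>i \<le> n\<close> \<open>k \<le> n\<close>]
proof (induction rule: dec_induct)
  case base
  show ?case
    using corner[of i] corner[of k] by (cases "i \<le> k") (simp_all add: max_def mult.assoc)
next
  case (step m)
  have "is_inv (insert (Suc m) {0..m}) (insert (Suc m) {0..m}) D (Z (Suc m))"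
    using inv[of "Suc m"] by (simp add: atLeast0_atMost_Suc)
  from is_inv_bordered_block[OF this inv] corner step.hyps
  have "Z (Suc m) i k
      = Z m i k + Z (Suc m) i (Suc m) * inverse (Z (Suc m) (Suc m) (Suc m)) * Z (Suc m) (Suc m) k"
    by simp
  then show ?case
    using step by auto
qed

theorem theorem6:
  fixes D :: "nat \<Rightarrow> nat \<Rightarrow> 'a::division_ring"
  assumes "generic D" and "i \<le> n" and "k \<le> n"
  shows "minv {0..n} {0..n} D i k =
    (\<Sum>m\<in>{max i k..n}. inverse (qdet m D i m) * qdet m D m m * inverse (qdet m D m k))"
proof -
  define Z where "Z m = minv {0..m} {0..m} D" for m
  have inv: "is_inv {0..m} {0..m} D (Z m)" for m
    using assms(1) is_inv_minv unfolding generic_def Z_def by blast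
  have entry: "Z m a b = inverse (qdet m D a b)" if "a \<le> m" "b \<le> m" for m a b
    using minv_eq_inverse_qdet[OF assms(1) that] unfolding Z_def .
  have corner: "Z m m m \<noteq> 0" for m
    using assms(1) entry[of m m m] unfolding generic_def by simp
  have "Z n i k = (\<Sum>m\<in>{max i k..n}. Z m i m * inverse (Z m m m) * Z m m k)"
    using inverse_entry_telescope[OF inv corner assms(2,3)] .
  also have "\<dots>
      = (\<Sum>m\<in>{max i k..n}. inverse (qdet m D i m) * qdet m D m m * inverse (qdet m D m k))"
    by (intro sum.cong) (simp_all add: entry)
  finally show ?thesis
    unfolding Z_def .
qed

end
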